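(* Suppose Assumptions (A1) and (A2) below hold, and let $\{\boldsymbol{x}_{i,t}\}$ be the decision sequence generated by Algorithm DOMFW (described in the context) with parameters $0<\alpha_t\le 1$ and a nondecreasing integer sequence $\{K_t\}$. Then for any $T\ge 2$ and $K_t\ge 2$ (for all $t$), $$\sum_{t=1}^T\sum_{i=1}^n \|\boldsymbol{x}_{i,t}-\boldsymbol{x}_{avg,t}\| \le \frac{n\Gamma_1}{1-\sigma_1^{K_1}}\sum_{i=1}^n\|\boldsymbol{x}_{i,1}\| + \sum_{i=1}^n\|\boldsymbol{x}_{i,1}-\boldsymbol{x}_{avg,1}\| + \left(\frac{n^2M\Gamma_1}{\sigma_1(1-\sigma_1)(1-\sigma_1^{K_1})}+2nM\right)\sum_{t=1}^T\alpha_t .$$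
   Context: Network: $n$ agents, $\mathcal{V}=\{1,\dots,n\}$, time-varying directed graphs $\mathcal{G}_t=(\mathcal{V},\mathcal{E}_t,A_t)$ with weight matrices $A_t\in\mathbb{R}^{n\times n}$; $\mathcal{N}_i^{in}(t)=\{j:(j,i)\in\mathcal{E}_t\}\cup\{i\}$, and $[A_t]_{ij}>0$ if $j\in\mathcal{N}_i^{in}(t)$, $[A_t]_{ij}=0$ otherwise. Assumption (A1): (a) there is $\zeta>0$ with $[A_t]_{ij}>\zeta$ whenever $[A_t]_{ij}>0$; (b) $\mathcal{G}_t$ is strongly connected for all $t$; (c) each $A_t$ is doubly stochastic. Assumption (A2): $\boldsymbol{X}\subset\mathbb{R}^d$ is convex compact with $\|\boldsymbol{x}-\boldsymbol{z}\|\le M$ for all $\boldsymbol{x},\boldsymbol{z}\in\boldsymbol{X}$. Each agent $i$ has at round $t$ a convex differentiable loss $f_{i,t}$ on $\boldsymbol{X}$. Algorithm DOMFW: initial points $\boldsymbol{x}_{i,1}\in\boldsymbol{X}$. For $t=1,\dots,T$: set $\boldsymbol{x}_{i,t}^1=\boldsymbol{x}_{i,t}$; for $k=1,\dots,K_t$, each agent $i$ computes $\hat{\boldsymbol{x}}_{i,t}^k=\sum_{j}[A_t]_{ij}\boldsymbol{x}_{j,t}^k$; $\overline{\nabla}f_{i,t}^1=\nabla f_{i,t}(\hat{\boldsymbol{x}}_{i,t}^1)$ and for $k\ge2$, $\overline{\nabla}f_{i,t}^k=\widehat{\nabla}f_{i,t}^{k-1}+\nabla f_{i,t}(\hat{\boldsymbol{x}}_{i,t}^k)-\nabla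 f_{i,t}(\hat{\boldsymbol{x}}_{i,t}^{k-1})$; $\widehat{\nabla}f_{i,t}^k=\sum_j[A_t]_{ij}\overline{\nabla}f_{j,t}^k$; $\boldsymbol{v}_{i,t}^k\in\arg\min_{\boldsymbol{x}\in\boldsymbol{X}}\langle\boldsymbol{x},\widehat{\nabla}f_{i,t}^k\rangle$; $\boldsymbol{x}_{i,t}^{k+1}=\hat{\boldsymbol{x}}_{i,t}^k+\alpha_t(\boldsymbol{v}_{i,t}^k-\hat{\boldsymbol{x}}_{i,t}^k)$. Then $\boldsymbol{x}_{i,t+1}=\boldsymbol{x}_{i,t}^{K_t+1}$. Notation: $\boldsymbol{x}_{avg,t}=\frac1n\sum_i\boldsymbol{x}_{i,t}$; $\sigma_1=1-\frac{\zeta}{4n^2}$, $\Gamma_1=\left(1-\frac{\zeta}{4n^2}\right)^{-1}$. *)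

theory Defs
  imports "HOL-Analysis.Analysis"
begin

text \<open>Agents are indexed by 0,...,n-1. Weight matrices are A t i j = [A_t]_{ij}.\<close>

definition in_neighbors :: "nat \<Rightarrow> (nat \<Rightarrow> nat \<Rightarrow> real) \<Rightarrow> nat \<Rightarrow> nat set" where
  "in_neighbors n W i = {j. j < n \<and> j \<noteq> i \<and> W i j > 0} \<union> {i}"

definition graph_edges :: "nat \<Rightarrow> (nat \<Rightarrow> nat \<Rightarrow> real) \<Rightarrow> (nat \<times> nat) set" where
  "graph_edges n W = {(j, i). j < n \<and> i < n \<and> j \<noteq> i \<and> W i j > 0}"

definition strongly_connected_graph :: "nat \<Rightarrow> (nat \<Rightarrow> nat \<Rightarrow> real) \<Rightarrow> bool" where
  "strongly_connected_graph n W \<longleftrightarrow> (\<forall>i<n. \<forall>j<n. (i, j) \<in> (graph_edges n W)\<^sup>*)"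

definition weights_on_graph :: "nat \<Rightarrow> (nat \<Rightarrow> nat \<Rightarrow> real) \<Rightarrow> bool" where
  "weights_on_graph n W \<longleftrightarrow>
     (\<forall>i<n. \<forall>j<n. (j \<in> in_neighbors n W i \<longrightarrow> W i j > 0) \<and>
                  (j \<notin> in_neighbors n W i \<longrightarrow> W i j = 0))"

definition doubly_stochastic :: "nat \<Rightarrow> (nat \<Rightarrow> nat \<Rightarrow> real) \<Rightarrow> bool" where
  "doubly_stochastic n W \<longleftrightarrow>
     (\<forall>i<n. \<forall>j<n. W i j \<ge> 0) \<and>
     (\<forall>i<n. (\<Sum>j<n. W i j) = 1) \<and>
     (\<forall>j<n. (\<Sum>i<n. W i j) = 1)"

definition sigma1 :: "nat \<Rightarrow> real \<Rightarrow> real" where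
  "sigma1 n \<zeta> = 1 - \<zeta> / (4 * (real n)\<^sup>2)"

definition Gamma1 :: "nat \<Rightarrow> real \<Rightarrow> real" where
  "Gamma1 n \<zeta> = inverse (1 - \<zeta> / (4 * (real n)\<^sup>2))"

definition xavg :: "nat \<Rightarrow> (nat \<Rightarrow> 'a::real_vector) \<Rightarrow> 'a" where
  "xavg n x = (1 / real n) *\<^sub>R (\<Sum>i<n. x i)"

end

(*
  Disagreement is measured by the l2 deviation D(x) = (sum_i |x_i - avg x|^2)^(1/2). For a doubly
  stochastic B and centred e, sum_i |(B e)_i|^2 = |e|^2 - 1/2 sum_{j,l} (B^T B)_{jl} |e_j - e_l|^2.
  Strong connectivity and the weight floor zeta give every cut of B^T B weight at least zeta/2, and
  charging the gaps between the sorted values of each coordinate of e to such cuts bounds this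
  Laplacian form below by (zeta/n^2) |e|^2; hence a mixing step contracts D by sigma1, whose square
  is at least 1 - zeta/n^2. The Frank-Wolfe move towards a point of X adds at most alpha_t sqrt n M.
  Over the K_t >= K_1 inner steps of round t this gives
  D_{t+1} <= sigma1^{K_1} D_t + alpha_t sqrt n M / (1 - sigma1), and summing this recursion and
  applying Cauchy-Schwarz gives a bound that the stated one dominates term by term.
*)

theory Submission
  imports Defs
begin

section \<open>Laplacian quadratic forms\<close>

definition laplacian_form :: "nat set \<Rightarrow> (nat \<Rightarrow> nat \<Rightarrow> real) \<Rightarrow> (nat \<Rightarrow> 'a::real_normed_vector) \<Rightarrow> real"
  where "laplacian_form I w y = (\<Sum>j\<in>I. \<Sum>l\<in>I. w j l * (norm (y j - y l))\<^sup>2)"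

lemma laplacian_form_real: "laplacian_form I w (y :: nat \<Rightarrow> real) = (\<Sum>j\<in>I. \<Sum>l\<in>I. w j l * (y j - y l)\<^sup>2)"
  by (simp add: laplacian_form_def)

lemma laplacian_form_nonneg:
  "(\<And>j l. j \<in> I \<Longrightarrow> l \<in> I \<Longrightarrow> 0 \<le> w j l) \<Longrightarrow> 0 \<le> laplacian_form I w y"
  unfolding laplacian_form_def by (intro sum_nonneg) auto

lemma power2_diff_ge_split:
  fixes a b c :: real
  assumes "b \<le> c" "c \<le> a"
  shows "(c - b)\<^sup>2 + (a - c)\<^sup>2 \<le> (a - b)\<^sup>2"
proof -
  have "(a - b)\<^sup>2 = (c - b)\<^sup>2 + (a - c)\<^sup>2 + 2 * (a - c) * (c - b)"
    by (simp add: power2_eq_square algebra_simps)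
  with assms show ?thesis by simp
qed

lemma sum_cross_pairs:
  assumes "finite I" "S \<subseteq> I"
  shows "(\<Sum>j\<in>I. \<Sum>l\<in>I. if (j \<in> S) \<noteq> (l \<in> S) then w j l else 0)
       = (\<Sum>j\<in>S. \<Sum>l\<in>I - S. w j l) + (\<Sum>j\<in>I - S. \<Sum>l\<in>S. w j l)"
proof -
  have "(\<Sum>j\<in>I. \<Sum>l\<in>I. if (j \<in> S) \<noteq> (l \<in> S) then w j l else 0)
      = (\<Sum>j\<in>I. if j \<in> S then (\<Sum>l\<in>I - S. w j l) else (\<Sum>l\<in>S. w j l))"
    using assms by (intro sum.cong refl) (auto simp: sum.If_cases Diff_eq Compl_eq Int_absorb1 Int_commute)
  also have "\<dots> = (\<Sum>j\<in>S. \<Sum>l\<in>I - S. w j l) + (\<Sum>j\<in>I - S. \<Sum>l\<in>S. w j l)"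
    using assms by (simp add: sum.If_cases Diff_eq Int_absorb1 Int_commute)
  finally show ?thesis .
qed

lemma laplacian_form_truncate:
  fixes y :: "nat \<Rightarrow> real"
  assumes fin: "finite I" and SI: "S \<subseteq> I"
    and w: "\<And>j l. j \<in> I \<Longrightarrow> l \<in> I \<Longrightarrow> 0 \<le> w j l"
    and top: "\<And>j. j \<in> S \<Longrightarrow> y j = u" and low: "\<And>j. j \<in> I - S \<Longrightarrow> y j \<le> c" and "c \<le> u"
    and cut: "\<eta> \<le> (\<Sum>j\<in>S. \<Sum>l\<in>I - S. w j l)" "\<eta> \<le> (\<Sum>j\<in>I - S. \<Sum>l\<in>S. w j l)"
  shows "laplacian_form I w (\<lambda>j. min (y j) c) + 2 * \<eta> * (u - c)\<^sup>2 \<le> laplacian_form I w y"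
proof -
  define cross where "cross j l = (if (j \<in> S) \<noteq> (l \<in> S) then w j l else 0)" for j l
  have pointwise: "w j l * (min (y j) c - min (y l) c)\<^sup>2 + (u - c)\<^sup>2 * cross j l \<le> w j l * (y j - y l)\<^sup>2"
    if "j \<in> I" "l \<in> I" for j l
  proof -
    have "(min (y j) c - min (y l) c)\<^sup>2 + (u - c)\<^sup>2 * of_bool ((j \<in> S) \<noteq> (l \<in> S)) \<le> (y j - y l)\<^sup>2"
      using that top low \<open>c \<le> u\<close> power2_diff_ge_split[of "y l" c u] power2_diff_ge_split[of "y j" c u]
      by (cases "j \<in> S"; cases "l \<in> S") (auto simp: min_def power2_commute)
    then show ?thesis
      using w[OF that] mult_left_mono unfolding cross_def by (fastforce simp: algebra_simps)
  qed
  have "2 * \<eta> \<le> (\<Sum>j\<in>I. \<Sum>l\<in>I. cross j l)"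
    using cut sum_cross_pairs[OF fin SI, of w] unfolding cross_def by simp
  then have "2 * \<eta> * (u - c)\<^sup>2 \<le> (u - c)\<^sup>2 * (\<Sum>j\<in>I. \<Sum>l\<in>I. cross j l)"
    by (simp add: mult.commute mult_right_mono)
  also have "laplacian_form I w (\<lambda>j. min (y j) c) + \<dots>
      = (\<Sum>j\<in>I. \<Sum>l\<in>I. w j l * (min (y j) c - min (y l) c)\<^sup>2 + (u - c)\<^sup>2 * cross j l)"
    by (simp add: laplacian_form_real sum.distrib sum_distrib_left)
  also have "\<dots> \<le> laplacian_form I w y"
    unfolding laplacian_form_real by (intro sum_mono pointwise)
  finally show ?thesis by simp
qed

lemma power2_add_le_of_bounds:
  fixes k \<eta> g d Q Q' :: real
  assumes "0 \<le> \<eta>" "0 \<le> k" "0 \<le> Q'" "2 * \<eta> * d\<^sup>2 \<le> k * Q'" "Q' + 2 * \<eta> * g\<^sup>2 \<le> Q"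
  shows "2 * \<eta> * (g + d)\<^sup>2 \<le> (k + 1) * Q"
proof (cases "k = 0")
  case True
  then have "d = 0 \<or> \<eta> = 0"
    using assms(1,4) by (simp add: mult_le_0_iff)
  then show ?thesis using assms True by auto
next
  case False
  have "(k + 1) * d\<^sup>2 + k * (k + 1) * g\<^sup>2 - k * (g + d)\<^sup>2 = (d - k * g)\<^sup>2"
    by (simp add: power2_eq_square algebra_simps)
  then have "k * (g + d)\<^sup>2 \<le> (k + 1) * d\<^sup>2 + k * (k + 1) * g\<^sup>2"
    by (smt (verit) zero_le_power2)
  then have "2 * \<eta> * (k * (g + d)\<^sup>2) \<le> 2 * \<eta> * ((k + 1) * d\<^sup>2 + k * (k + 1) * g\<^sup>2)"
    using assms(1) by (intro mult_left_mono) auto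
  then have "k * (2 * \<eta> * (g + d)\<^sup>2) \<le> (k + 1) * (2 * \<eta> * d\<^sup>2) + k * (k + 1) * (2 * \<eta> * g\<^sup>2)"
    by (simp add: algebra_simps)
  also have "\<dots> \<le> (k + 1) * (k * Q') + k * (k + 1) * (Q - Q')"
    using assms by (intro add_mono mult_left_mono) auto
  also have "\<dots> = k * ((k + 1) * Q)"
    by (simp add: algebra_simps)
  finally show ?thesis using assms(2) False by simp
qed

lemma Max_remove_Max_less:
  fixes Y :: "'a::linorder set"
  assumes "finite Y" "Y - {Max Y} \<noteq> {}"
  shows "Max (Y - {Max Y}) \<in> Y - {Max Y}" "Max (Y - {Max Y}) < Max Y"
proof -
  show "Max (Y - {Max Y}) \<in> Y - {Max Y}"
    using assms by (intro Max_in) auto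
  then show "Max (Y - {Max Y}) < Max Y"
    using assms by (simp add: order.strict_iff_order)
qed

lemma image_min_Max_remove:
  fixes Y :: "'a::linorder set"
  assumes "finite Y" "Y - {Max Y} \<noteq> {}"
  shows "(\<lambda>v. min v (Max (Y - {Max Y}))) ` Y = Y - {Max Y}"
proof -
  let ?c = "Max (Y - {Max Y})"
  have c: "?c \<in> Y - {Max Y}" "?c < Max Y"
    by (rule Max_remove_Max_less[OF assms])+
  have "v \<le> ?c" if "v \<in> Y - {Max Y}" for v
    using that assms by simp
  then have min_eq: "min v ?c = (if v = Max Y then ?c else v)" if "v \<in> Y" for v
    using that c by (auto simp: min_def)
  show ?thesis
  proof
    show "(\<lambda>v. min v ?c) ` Y \<subseteq> Y - {Max Y}"
      using min_eq c by auto
    show "Y - {Max Y} \<subseteq> (\<lambda>v. min v ?c) ` Y"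
      using min_eq by (force simp: image_iff)
  qed
qed

lemma Min_remove_Max:
  fixes Y :: "'a::linorder set"
  assumes "finite Y" "Y - {Max Y} \<noteq> {}"
  shows "Min (Y - {Max Y}) = Min Y"
proof -
  have "Min Y \<noteq> Max Y"
    using assms by (metis Diff_eq_empty_iff Max_ge Min_le antisym singletonI subsetI)
  moreover have "Min Y \<in> Y"
    using assms by (intro Min_in) auto
  ultimately have "Min Y \<in> Y - {Max Y}"
    by simp
  then show ?thesis
    using assms by (intro antisym Min_antimono Min_le) auto
qed

lemma laplacian_form_range_bound:
  fixes y :: "nat \<Rightarrow> real"
  assumes fin: "finite I" and ne: "I \<noteq> {}" and "0 \<le> \<eta>"
    and w: "\<And>j l. j \<in> I \<Longrightarrow> l \<in> I \<Longrightarrow> 0 \<le> w j l"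
    and cut: "\<And>S. S \<subseteq> I \<Longrightarrow> S \<noteq> {} \<Longrightarrow> S \<noteq> I \<Longrightarrow> \<eta> \<le> (\<Sum>j\<in>S. \<Sum>l\<in>I - S. w j l)"
  shows "card (y ` I) \<le> Suc k \<Longrightarrow> 2 * \<eta> * (Max (y ` I) - Min (y ` I))\<^sup>2 \<le> real k * laplacian_form I w y"
proof (induction k arbitrary: y)
  case 0
  then have "card (y ` I) = 1"
    using fin ne by (simp add: le_Suc_eq)
  then obtain c where "y ` I = {c}"
    by (rule card_1_singletonE)
  then show ?case by simp
next
  case (Suc k)
  have Q_nonneg: "0 \<le> laplacian_form I w z" for z :: "nat \<Rightarrow> real"
    using w by (rule laplacian_form_nonneg)
  show ?case
  proof (cases "card (y ` I) \<le> Suc k")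
    case True
    have "real k * laplacian_form I w y \<le> real (Suc k) * laplacian_form I w y"
      using Q_nonneg[of y] by (intro mult_right_mono) auto
    then show ?thesis
      using Suc.IH[OF True] by linarith
  next
    case False
    define Y u c where "Y = y ` I" and "u = Max Y" and "c = Max (Y - {u})"
    define S where "S = {j \<in> I. y j = u}"
    have finY: "finite Y" using fin by (simp add: Y_def)
    have cardY: "card Y = Suc (Suc k)" using False Suc.prems by (simp add: Y_def)
    moreover have u_in: "u \<in> Y"
      using finY cardY unfolding u_def by (intro Max_in) auto
    ultimately have card_rest: "card (Y - {u}) = Suc k"
      by simp
    then have rest: "Y - {u} \<noteq> {}"
      by (metis card.empty nat.distinct(1))
    have c: "c \<in> Y - {u}" "c < u"
      using Max_remove_Max_less[OF finY] rest by (simp_all add: u_def c_def)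
    have img: "(\<lambda>j. min (y j) c) ` I = Y - {u}"
      using image_min_Max_remove[OF finY] rest by (simp add: Y_def u_def c_def image_image)
    have IH: "2 * \<eta> * (c - Min Y)\<^sup>2 \<le> real k * laplacian_form I w (\<lambda>j. min (y j) c)"
      using Suc.IH[of "\<lambda>j. min (y j) c"] img card_rest Min_remove_Max[OF finY] rest
      by (simp add: u_def c_def)
    have S: "S \<subseteq> I" "S \<noteq> {}" "S \<noteq> I"
      using u_in c(1) by (auto simp: S_def Y_def)
    have low: "y j \<le> c" if "j \<in> I - S" for j
      using that finY by (auto simp: S_def Y_def c_def)
    have "laplacian_form I w (\<lambda>j. min (y j) c) + 2 * \<eta> * (u - c)\<^sup>2 \<le> laplacian_form I w y"
    proof (rule laplacian_form_truncate[OF fin S(1) w _ low])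
      show "\<eta> \<le> (\<Sum>j\<in>I - S. \<Sum>l\<in>S. w j l)"
        using cut[of "I - S"] S by (simp add: Diff_Diff_Int Int_absorb1) blast
    qed (use cut S c in \<open>auto simp: S_def\<close>)
    then have "2 * \<eta> * ((u - c) + (c - Min Y))\<^sup>2 \<le> (real k + 1) * laplacian_form I w y"
      using IH Q_nonneg \<open>0 \<le> \<eta>\<close> by (intro power2_add_le_of_bounds) auto
    then show ?thesis by (simp add: Y_def u_def add.commute)
  qed
qed

lemma laplacian_form_complete_le:
  fixes y :: "nat \<Rightarrow> real"
  assumes fin: "finite I" and ne: "I \<noteq> {}" and "0 \<le> \<eta>"
    and w: "\<And>j l. j \<in> I \<Longrightarrow> l \<in> I \<Longrightarrow> 0 \<le> w j l"
    and cut: "\<And>S. S \<subseteq> I \<Longrightarrow> S \<noteq> {} \<Longrightarrow> S \<noteq> I \<Longrightarrow> \<eta> \<le> (\<Sum>j\<in>S. \<Sum>l\<in>I - S. w j l)"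
  shows "2 * \<eta> * laplacian_form I (\<lambda>_ _. 1) y \<le> real (card I) ^ 2 * real (card I - 1) * laplacian_form I w y"
proof -
  define D where "D = Max (y ` I) - Min (y ` I)"
  have range: "Min (y ` I) \<le> y i" "y i \<le> Max (y ` I)" if "i \<in> I" for i
    using that fin by simp_all
  have "(y j - y l)\<^sup>2 \<le> D\<^sup>2" if "j \<in> I" "l \<in> I" for j l
  proof -
    have "\<bar>y j - y l\<bar> \<le> D"
      unfolding D_def abs_le_iff using range[OF that(1)] range[OF that(2)] by linarith
    then show ?thesis
      using power_mono[OF _ abs_ge_zero, of _ D 2] by simp
  qed
  then have "laplacian_form I (\<lambda>_ _. 1) y \<le> (\<Sum>j\<in>I. \<Sum>l\<in>I. D\<^sup>2)"
    unfolding laplacian_form_real by (intro sum_mono) auto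
  also have "\<dots> = real (card I) ^ 2 * D\<^sup>2"
    by (simp add: power2_eq_square)
  finally have complete: "laplacian_form I (\<lambda>_ _. 1) y \<le> real (card I) ^ 2 * D\<^sup>2" .
  have "card (y ` I) \<le> Suc (card I - 1)"
    using card_image_le[OF fin, of y] by simp
  then have spread: "2 * \<eta> * D\<^sup>2 \<le> real (card I - 1) * laplacian_form I w y"
    unfolding D_def using laplacian_form_range_bound[OF fin ne \<open>0 \<le> \<eta>\<close> w cut] by blast
  have "2 * \<eta> * laplacian_form I (\<lambda>_ _. 1) y \<le> 2 * \<eta> * (real (card I) ^ 2 * D\<^sup>2)"
    using complete \<open>0 \<le> \<eta>\<close> by (intro mult_left_mono) auto
  also have "\<dots> = real (card I) ^ 2 * (2 * \<eta> * D\<^sup>2)"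
    by (simp add: mult_ac)
  also have "\<dots> \<le> real (card I) ^ 2 * (real (card I - 1) * laplacian_form I w y)"
    using spread by (intro mult_left_mono) auto
  finally show ?thesis
    by (simp add: mult_ac)
qed

lemma laplacian_form_euclidean:
  fixes e :: "nat \<Rightarrow> 'a::euclidean_space"
  shows "laplacian_form I w e = (\<Sum>b\<in>Basis. laplacian_form I w (\<lambda>j. e j \<bullet> b))"
proof -
  have norm_sq: "(norm x)\<^sup>2 = (\<Sum>b\<in>Basis. (x \<bullet> b)\<^sup>2)" for x :: 'a
    unfolding power2_norm_eq_inner by (subst euclidean_inner) (simp add: power2_eq_square)
  have "laplacian_form I w e = (\<Sum>j\<in>I. \<Sum>l\<in>I. \<Sum>b\<in>Basis. w j l * (e j \<bullet> b - e l \<bullet> b)\<^sup>2)"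
    unfolding laplacian_form_def by (simp add: norm_sq inner_diff_left sum_distrib_left)
  also have "\<dots> = (\<Sum>b\<in>Basis. laplacian_form I w (\<lambda>j. e j \<bullet> b))"
    unfolding laplacian_form_real by (subst sum.swap) (simp add: sum.swap[of _ I Basis])
  finally show ?thesis .
qed

lemma laplacian_form_expand:
  fixes e :: "nat \<Rightarrow> 'a::real_inner"
  shows "laplacian_form I w e = (\<Sum>j\<in>I. (\<Sum>l\<in>I. w j l) * (norm (e j))\<^sup>2)
    + (\<Sum>l\<in>I. (\<Sum>j\<in>I. w j l) * (norm (e l))\<^sup>2) - 2 * (\<Sum>j\<in>I. \<Sum>l\<in>I. w j l * (e j \<bullet> e l))"
proof -
  have "w j l * (norm (e j - e l))\<^sup>2 = w j l * (norm (e j))\<^sup>2 + w j l * (norm (e l))\<^sup>2 - 2 * (w j l * (e j \<bullet> e l))"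
    for j l
    by (simp add: power2_norm_eq_inner inner_diff_left inner_diff_right inner_commute algebra_simps)
  then have "laplacian_form I w e = (\<Sum>j\<in>I. \<Sum>l\<in>I. w j l * (norm (e j))\<^sup>2)
      + (\<Sum>j\<in>I. \<Sum>l\<in>I. w j l * (norm (e l))\<^sup>2) - 2 * (\<Sum>j\<in>I. \<Sum>l\<in>I. w j l * (e j \<bullet> e l))"
    unfolding laplacian_form_def by (simp only: sum.distrib sum_subtractf sum_distrib_left)
  also have "(\<Sum>j\<in>I. \<Sum>l\<in>I. w j l * (norm (e l))\<^sup>2) = (\<Sum>l\<in>I. \<Sum>j\<in>I. w j l * (norm (e l))\<^sup>2)"
    by (rule sum.swap)
  finally show ?thesis
    by (simp only: sum_distrib_right)
qed

section \<open>Spectral gap of a mixing step\<close>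

definition mixing_matrix :: "nat \<Rightarrow> real \<Rightarrow> (nat \<Rightarrow> nat \<Rightarrow> real) \<Rightarrow> bool" where
  "mixing_matrix n \<zeta> B \<longleftrightarrow> doubly_stochastic n B \<and> weights_on_graph n B \<and> strongly_connected_graph n B
     \<and> (\<forall>i<n. \<forall>j<n. 0 < B i j \<longrightarrow> \<zeta> < B i j)"

definition gram :: "nat \<Rightarrow> (nat \<Rightarrow> nat \<Rightarrow> real) \<Rightarrow> nat \<Rightarrow> nat \<Rightarrow> real" where
  "gram n B j l = (\<Sum>k<n. B k j * B k l)"

lemma gram_sym: "gram n B j l = gram n B l j"
  unfolding gram_def by (simp add: mult.commute)

lemma gram_nonneg: "doubly_stochastic n B \<Longrightarrow> j < n \<Longrightarrow> l < n \<Longrightarrow> 0 \<le> gram n B j l"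
  unfolding gram_def doubly_stochastic_def by (intro sum_nonneg) auto

lemma gram_ge: "doubly_stochastic n B \<Longrightarrow> k < n \<Longrightarrow> j < n \<Longrightarrow> l < n \<Longrightarrow> B k j * B k l \<le> gram n B j l"
  unfolding gram_def doubly_stochastic_def by (intro member_le_sum) auto

lemma gram_row_sum:
  assumes "doubly_stochastic n B" "j < n"
  shows "(\<Sum>l<n. gram n B j l) = 1"
proof -
  have "(\<Sum>l<n. gram n B j l) = (\<Sum>k<n. B k j * (\<Sum>l<n. B k l))"
    unfolding gram_def by (subst sum.swap) (simp add: sum_distrib_left)
  also have "\<dots> = 1"
    using assms unfolding doubly_stochastic_def by simp
  finally show ?thesis .
qed

lemma gram_col_sum: "doubly_stochastic n B \<Longrightarrow> l < n \<Longrightarrow> (\<Sum>j<n. gram n B j l) = 1"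
  using gram_row_sum by (simp add: gram_sym[of n B _ l])

lemma rtrancl_crossing_edge:
  assumes "(s, r) \<in> E\<^sup>*" "s \<in> S" "r \<notin> S"
  shows "\<exists>a b. (a, b) \<in> E \<and> a \<in> S \<and> b \<notin> S"
  using assms
proof (induction rule: rtrancl_induct)
  case (step y z)
  then show ?case by (cases "y \<in> S") auto
qed simp

lemma gram_cut_ge:
  assumes mix: "mixing_matrix n \<zeta> B" and S: "S \<subseteq> {..<n}" "S \<noteq> {}" "S \<noteq> {..<n}"
  shows "\<zeta> / 2 \<le> (\<Sum>j\<in>S. \<Sum>l\<in>{..<n} - S. gram n B j l)"
proof -
  have ds: "doubly_stochastic n B"
    using mix by (simp add: mixing_matrix_def)
  obtain s r where "s \<in> S" "r < n" "r \<notin> S"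
    using S by blast
  moreover have "s < n" using \<open>s \<in> S\<close> S by auto
  moreover have "(s, r) \<in> (graph_edges n B)\<^sup>*"
    using mix calculation unfolding mixing_matrix_def strongly_connected_graph_def by blast
  ultimately obtain a b where ab: "(a, b) \<in> graph_edges n B" "a \<in> S" "b \<notin> S"
    using rtrancl_crossing_edge by metis
  then have abn: "a < n" "b < n" "0 < B b a"
    by (auto simp: graph_edges_def)
  have "0 < B b b"
    using mix abn unfolding mixing_matrix_def weights_on_graph_def by (simp add: in_neighbors_def)
  then have big: "\<zeta> < B b a" "\<zeta> < B b b" "0 < B b b"
    using mix abn unfolding mixing_matrix_def by auto
  have "(\<Sum>l\<in>S. B b l) + (\<Sum>l\<in>{..<n} - S. B b l) = 1"
    using ds abn sum.subset_diff[OF S(1), of "B b"] unfolding doubly_stochastic_def by simp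
  then consider "1 / 2 \<le> (\<Sum>l\<in>{..<n} - S. B b l)" | "1 / 2 \<le> (\<Sum>l\<in>S. B b l)"
    by linarith
  then show ?thesis
  proof cases
    case 1
    have "\<zeta> / 2 \<le> B b a * (\<Sum>l\<in>{..<n} - S. B b l)"
      using big abn 1 mult_mono[of \<zeta> "B b a" "1 / 2"] by simp
    also have "\<dots> \<le> (\<Sum>l\<in>{..<n} - S. gram n B a l)"
      unfolding sum_distrib_left using ds abn by (intro sum_mono gram_ge) auto
    also have "\<dots> \<le> (\<Sum>j\<in>S. \<Sum>l\<in>{..<n} - S. gram n B j l)"
      using ab(2) S ds finite_subset[OF S(1)]
      by (intro member_le_sum sum_nonneg gram_nonneg) auto
    finally show ?thesis .
  next
    case 2
    have "\<zeta> / 2 \<le> B b b * (\<Sum>j\<in>S. B b j)"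
      using big 2 mult_mono[of \<zeta> "B b b" "1 / 2"] by simp
    also have "\<dots> \<le> (\<Sum>j\<in>S. gram n B j b)"
      unfolding sum_distrib_left using ds abn S by (intro sum_mono) (auto simp: mult.commute gram_ge)
    also have "\<dots> \<le> (\<Sum>j\<in>S. \<Sum>l\<in>{..<n} - S. gram n B j l)"
      using ab(3) abn S ds by (intro sum_mono member_le_sum gram_nonneg) auto
    finally show ?thesis .
  qed
qed

lemma laplacian_form_gram_ge:
  fixes e :: "nat \<Rightarrow> 'a::euclidean_space"
  assumes mix: "mixing_matrix n \<zeta> B" and "0 \<le> \<zeta>" "1 \<le> n"
  shows "\<zeta> * laplacian_form {..<n} (\<lambda>_ _. 1) e \<le> real n ^ 3 * laplacian_form {..<n} (gram n B) e"
proof -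
  have ds: "doubly_stochastic n B"
    using mix by (simp add: mixing_matrix_def)
  have "\<zeta> * laplacian_form {..<n} (\<lambda>_ _. 1) y \<le> real n ^ 3 * laplacian_form {..<n} (gram n B) y"
    for y :: "nat \<Rightarrow> real"
  proof -
    have "2 * (\<zeta> / 2) * laplacian_form {..<n} (\<lambda>_ _. 1) y
        \<le> real (card {..<n}) ^ 2 * real (card {..<n} - 1) * laplacian_form {..<n} (gram n B) y"
      using \<open>0 \<le> \<zeta>\<close> \<open>1 \<le> n\<close> gram_cut_ge[OF mix] gram_nonneg[OF ds]
      by (intro laplacian_form_complete_le) (auto simp: lessThan_empty_iff)
    also have "\<dots> \<le> real n ^ 2 * real n * laplacian_form {..<n} (gram n B) y"
      unfolding card_lessThan using gram_nonneg[OF ds]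
      by (intro mult_right_mono mult_left_mono laplacian_form_nonneg) auto
    finally show ?thesis
      by (simp add: power2_eq_square power3_eq_cube)
  qed
  then show ?thesis
    unfolding laplacian_form_euclidean[of _ _ e] sum_distrib_left by (intro sum_mono)
qed

lemma sum_norm_mix_sq:
  fixes e :: "nat \<Rightarrow> 'a::real_inner"
  shows "(\<Sum>i<n. (norm (\<Sum>j<n. B i j *\<^sub>R e j))\<^sup>2) = (\<Sum>j<n. \<Sum>l<n. gram n B j l * (e j \<bullet> e l))"
proof -
  have "(\<Sum>i<n. (norm (\<Sum>j<n. B i j *\<^sub>R e j))\<^sup>2) = (\<Sum>i<n. \<Sum>j<n. \<Sum>l<n. B i j * B i l * (e j \<bullet> e l))"
    unfolding power2_norm_eq_inner
    by (simp only: inner_sum_left inner_scaleR_left)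
      (simp only: inner_sum_right inner_scaleR_right sum_distrib_left mult.assoc)
  also have "\<dots> = (\<Sum>j<n. \<Sum>i<n. \<Sum>l<n. B i j * B i l * (e j \<bullet> e l))"
    by (rule sum.swap)
  also have "\<dots> = (\<Sum>j<n. \<Sum>l<n. \<Sum>i<n. B i j * B i l * (e j \<bullet> e l))"
    by (intro sum.cong refl sum.swap)
  also have "\<dots> = (\<Sum>j<n. \<Sum>l<n. gram n B j l * (e j \<bullet> e l))"
    unfolding gram_def by (simp only: sum_distrib_right)
  finally show ?thesis .
qed

lemma mixing_contraction:
  fixes e :: "nat \<Rightarrow> 'a::euclidean_space"
  assumes mix: "mixing_matrix n \<zeta> B" and "0 \<le> \<zeta>" "1 \<le> n"
    and centered: "(\<Sum>i<n. e i) = 0"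
  shows "(\<Sum>i<n. (norm (\<Sum>j<n. B i j *\<^sub>R e j))\<^sup>2) \<le> (1 - \<zeta> / (real n)\<^sup>2) * (\<Sum>i<n. (norm (e i))\<^sup>2)"
proof -
  define E where "E = (\<Sum>i<n. (norm (e i))\<^sup>2)"
  define G where "G = (\<Sum>j<n. \<Sum>l<n. gram n B j l * (e j \<bullet> e l))"
  have ds: "doubly_stochastic n B"
    using mix by (simp add: mixing_matrix_def)
  have "laplacian_form {..<n} (gram n B) e = 2 * E - 2 * G"
    unfolding laplacian_form_expand E_def G_def by (simp add: gram_row_sum[OF ds] gram_col_sum[OF ds])
  moreover have "laplacian_form {..<n} (\<lambda>_ _. 1) e = 2 * real n * E"
  proof -
    have "(\<Sum>j<n. \<Sum>l<n. e j \<bullet> e l) = (\<Sum>j<n. e j) \<bullet> (\<Sum>l<n. e l)"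
      by (simp only: inner_sum_left) (simp only: inner_sum_right)
    then show ?thesis
      unfolding laplacian_form_expand E_def using centered by (simp add: sum_distrib_left mult.assoc)
  qed
  ultimately have "\<zeta> * (2 * real n * E) \<le> real n ^ 3 * (2 * E - 2 * G)"
    using laplacian_form_gram_ge[OF assms(1-3), of e] by simp
  then have "real n * (\<zeta> * E) \<le> real n * (real n ^ 2 * (E - G))"
    by (simp add: algebra_simps power3_eq_cube power2_eq_square)
  then have "\<zeta> * E \<le> real n ^ 2 * (E - G)"
    using \<open>1 \<le> n\<close> by simp
  then have "G \<le> (1 - \<zeta> / (real n)\<^sup>2) * E"
    using \<open>1 \<le> n\<close> by (simp add: field_simps)
  then show ?thesis
    unfolding sum_norm_mix_sq G_def E_def .
qed

lemma mixing_matrix_zeta_lt_one: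
  assumes mix: "mixing_matrix n \<zeta> B" and "1 \<le> n"
  shows "\<zeta> < 1"
proof -
  have "0 \<in> in_neighbors n B 0" "0 < n"
    using \<open>1 \<le> n\<close> by (simp_all add: in_neighbors_def)
  then have "0 < B 0 0"
    using mix unfolding mixing_matrix_def weights_on_graph_def by blast
  then have "\<zeta> < B 0 0"
    using mix \<open>1 \<le> n\<close> unfolding mixing_matrix_def by simp
  also have "\<dots> \<le> (\<Sum>j<n. B 0 j)"
    using mix \<open>1 \<le> n\<close> unfolding mixing_matrix_def doubly_stochastic_def by (intro member_le_sum) auto
  also have "\<dots> = 1"
    using mix \<open>1 \<le> n\<close> unfolding mixing_matrix_def doubly_stochastic_def by simp
  finally show ?thesis .
qed

section \<open>Consensus deviation\<close>

definition deviation :: "nat \<Rightarrow> (nat \<Rightarrow> 'a::real_normed_vector) \<Rightarrow> real" where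
  "deviation n x = L2_set (\<lambda>i. norm (x i - xavg n x)) {..<n}"

lemma xavg_cong: "(\<And>i. i < n \<Longrightarrow> x i = y i) \<Longrightarrow> xavg n x = xavg n y"
  unfolding xavg_def by simp

lemma deviation_cong: "(\<And>i. i < n \<Longrightarrow> x i = y i) \<Longrightarrow> deviation n x = deviation n y"
  unfolding deviation_def using xavg_cong[of n x y] by (intro L2_set_cong) auto

lemma xavg_combination:
  "xavg n (\<lambda>i. p *\<^sub>R x i + q *\<^sub>R y i) = p *\<^sub>R xavg n x + q *\<^sub>R xavg n y"
  unfolding xavg_def by (simp add: sum.distrib scaleR_sum_right[symmetric] algebra_simps)

lemma sum_diff_xavg: "1 \<le> n \<Longrightarrow> (\<Sum>i<n. x i - xavg n x) = 0"
  unfolding xavg_def by (simp add: sum_subtractf sum_constant_scaleR)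

lemma xavg_in_convex:
  assumes "1 \<le> n" "convex X" "\<And>i. i < n \<Longrightarrow> x i \<in> X"
  shows "xavg n x \<in> X"
proof -
  have "(\<Sum>i<n. (1 / real n) *\<^sub>R x i) \<in> X"
    using assms by (intro convex_sum) auto
  then show ?thesis
    unfolding xavg_def by (simp add: scaleR_sum_right)
qed

lemma xavg_mix:
  assumes "doubly_stochastic n B"
  shows "xavg n (\<lambda>i. \<Sum>j<n. B i j *\<^sub>R x j) = xavg n x"
proof -
  have "(\<Sum>i<n. \<Sum>j<n. B i j *\<^sub>R x j) = (\<Sum>j<n. (\<Sum>i<n. B i j) *\<^sub>R x j)"
    by (subst sum.swap) (simp add: scaleR_sum_left)
  also have "\<dots> = (\<Sum>j<n. x j)"
    using assms by (simp add: doubly_stochastic_def)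
  finally show ?thesis
    unfolding xavg_def by simp
qed

lemma deviation_combination_le:
  assumes "0 \<le> a" "a \<le> 1"
  shows "deviation n (\<lambda>i. (1 - a) *\<^sub>R x i + a *\<^sub>R y i) \<le> (1 - a) * deviation n x + a * deviation n y"
proof -
  have "deviation n (\<lambda>i. (1 - a) *\<^sub>R x i + a *\<^sub>R y i)
      \<le> L2_set (\<lambda>i. (1 - a) * norm (x i - xavg n x) + a * norm (y i - xavg n y)) {..<n}"
    unfolding deviation_def xavg_combination
  proof (rule L2_set_mono)
    fix i
    have "(1 - a) *\<^sub>R x i + a *\<^sub>R y i - ((1 - a) *\<^sub>R xavg n x + a *\<^sub>R xavg n y)
        = (1 - a) *\<^sub>R (x i - xavg n x) + a *\<^sub>R (y i - xavg n y)"
      by (simp add: algebra_simps)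
    then show "norm ((1 - a) *\<^sub>R x i + a *\<^sub>R y i - ((1 - a) *\<^sub>R xavg n x + a *\<^sub>R xavg n y))
        \<le> (1 - a) * norm (x i - xavg n x) + a * norm (y i - xavg n y)"
      using assms by (metis abs_of_nonneg diff_ge_0_iff_ge norm_scaleR norm_triangle_ineq)
  qed simp
  also have "\<dots> \<le> (1 - a) * deviation n x + a * deviation n y"
    using L2_set_triangle_ineq[of "\<lambda>i. (1 - a) * norm (x i - xavg n x)" "\<lambda>i. a * norm (y i - xavg n y)"] assms
    by (simp add: deviation_def L2_set_right_distrib)
  finally show ?thesis .
qed

lemma deviation_le_diameter:
  assumes "1 \<le> n" "convex X" "\<And>i. i < n \<Longrightarrow> x i \<in> X"
    and diam: "\<And>y z. y \<in> X \<Longrightarrow> z \<in> X \<Longrightarrow> norm (y - z) \<le> M"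
  shows "deviation n x \<le> sqrt (real n) * M"
proof -
  have "xavg n x \<in> X"
    using assms(1-3) by (rule xavg_in_convex)
  moreover have "x 0 \<in> X"
    using assms(1,3) by simp
  then have "0 \<le> M"
    using diam[of "x 0" "x 0"] by simp
  ultimately show ?thesis
    unfolding deviation_def using L2_set_mono[of "{..<n}" _ "\<lambda>_. M"] assms(3) diam
    by (simp add: L2_set_constant)
qed

lemma deviation_mix_le:
  fixes x :: "nat \<Rightarrow> 'a::euclidean_space"
  assumes mix: "mixing_matrix n \<zeta> B" and "0 \<le> \<zeta>" "1 \<le> n"
    and \<sigma>: "0 \<le> \<sigma>" "1 - \<zeta> / (real n)\<^sup>2 \<le> \<sigma>\<^sup>2"
  shows "deviation n (\<lambda>i. \<Sum>j<n. B i j *\<^sub>R x j) \<le> \<sigma> * deviation n x"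
proof -
  define e where "e i = x i - xavg n x" for i
  have ds: "doubly_stochastic n B"
    using mix by (simp add: mixing_matrix_def)
  have mixed_dev: "(\<Sum>j<n. B i j *\<^sub>R x j) - xavg n x = (\<Sum>j<n. B i j *\<^sub>R e j)" if "i < n" for i
  proof -
    have "(\<Sum>j<n. B i j *\<^sub>R e j) = (\<Sum>j<n. B i j *\<^sub>R x j) - (\<Sum>j<n. B i j) *\<^sub>R xavg n x"
      unfolding e_def by (simp add: scaleR_diff_right sum_subtractf scaleR_sum_left)
    then show ?thesis
      using ds that by (simp add: doubly_stochastic_def)
  qed
  have "(deviation n (\<lambda>i. \<Sum>j<n. B i j *\<^sub>R x j))\<^sup>2
      = (\<Sum>i<n. (norm ((\<Sum>j<n. B i j *\<^sub>R x j) - xavg n x))\<^sup>2)"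
    unfolding deviation_def xavg_mix[OF ds] L2_set_def by (simp add: sum_nonneg)
  also have "\<dots> = (\<Sum>i<n. (norm (\<Sum>j<n. B i j *\<^sub>R e j))\<^sup>2)"
    using mixed_dev by simp
  also have "\<dots> \<le> (1 - \<zeta> / (real n)\<^sup>2) * (\<Sum>i<n. (norm (e i))\<^sup>2)"
    unfolding e_def by (rule mixing_contraction[OF assms(1-3) sum_diff_xavg[OF \<open>1 \<le> n\<close>]])
  also have "\<dots> \<le> \<sigma>\<^sup>2 * (\<Sum>i<n. (norm (e i))\<^sup>2)"
    using \<sigma>(2) by (intro mult_right_mono sum_nonneg) auto
  also have "\<dots> = (\<sigma> * deviation n x)\<^sup>2"
    unfolding power_mult_distrib deviation_def L2_set_def e_def by (simp add: sum_nonneg)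
  finally show ?thesis
    using \<sigma>(1) by (rule power2_le_imp_le[OF _ mult_nonneg_nonneg]) (simp add: deviation_def)
qed

lemma deviation_step_le:
  fixes x v :: "nat \<Rightarrow> 'a::euclidean_space"
  assumes mix: "mixing_matrix n \<zeta> B" and "0 \<le> \<zeta>" "1 \<le> n"
    and \<sigma>: "0 \<le> \<sigma>" "1 - \<zeta> / (real n)\<^sup>2 \<le> \<sigma>\<^sup>2" and a: "0 \<le> a" "a \<le> 1"
    and X: "convex X" "\<And>i. i < n \<Longrightarrow> v i \<in> X" "\<And>y z. y \<in> X \<Longrightarrow> z \<in> X \<Longrightarrow> norm (y - z) \<le> M"
  shows "deviation n (\<lambda>i. (\<Sum>j<n. B i j *\<^sub>R x j) + a *\<^sub>R (v i - (\<Sum>j<n. B i j *\<^sub>R x j)))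
    \<le> \<sigma> * deviation n x + a * sqrt (real n) * M"
proof -
  let ?h = "\<lambda>i. \<Sum>j<n. B i j *\<^sub>R x j"
  have "(\<lambda>i. ?h i + a *\<^sub>R (v i - ?h i)) = (\<lambda>i. (1 - a) *\<^sub>R ?h i + a *\<^sub>R v i)"
    by (simp add: algebra_simps)
  then have "deviation n (\<lambda>i. ?h i + a *\<^sub>R (v i - ?h i)) \<le> (1 - a) * deviation n ?h + a * deviation n v"
    using deviation_combination_le[OF a] by simp
  also have "\<dots> \<le> 1 * (\<sigma> * deviation n x) + a * (sqrt (real n) * M)"
    using a \<sigma>(1) deviation_mix_le[OF assms(1-5), of x] deviation_le_diameter[OF \<open>1 \<le> n\<close> X]
    by (intro add_mono mult_mono) (auto simp: deviation_def)
  finally show ?thesis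
    by simp
qed

lemma linear_recurrence_le:
  fixes y :: "nat \<Rightarrow> real"
  assumes rec: "\<And>k. 1 \<le> k \<Longrightarrow> k \<le> K \<Longrightarrow> y (Suc k) \<le> \<sigma> * y k + c"
    and "0 \<le> \<sigma>" "\<sigma> < 1" "0 \<le> c"
  shows "y (Suc K) \<le> \<sigma> ^ K * y 1 + c / (1 - \<sigma>)"
  using rec
proof (induction K)
  case 0
  then show ?case
    using assms(3,4) by simp
next
  case (Suc K)
  have "y (Suc (Suc K)) \<le> \<sigma> * y (Suc K) + c"
    using Suc.prems by simp
  also have "\<dots> \<le> \<sigma> * (\<sigma> ^ K * y 1 + c / (1 - \<sigma>)) + c"
    using Suc assms(2) by (intro add_right_mono mult_left_mono) auto
  also have "\<dots> = \<sigma> ^ Suc K * y 1 + c / (1 - \<sigma>)"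
    using assms(3) by (simp add: field_simps)
  finally show ?case .
qed

lemma deviation_inner_loop_le:
  fixes y v :: "nat \<Rightarrow> nat \<Rightarrow> 'a::euclidean_space"
  assumes mix: "mixing_matrix n \<zeta> B" and "0 \<le> \<zeta>" "1 \<le> n"
    and \<sigma>: "0 \<le> \<sigma>" "\<sigma> < 1" "1 - \<zeta> / (real n)\<^sup>2 \<le> \<sigma>\<^sup>2" and a: "0 \<le> a" "a \<le> 1"
    and X: "convex X" "\<And>y z. y \<in> X \<Longrightarrow> z \<in> X \<Longrightarrow> norm (y - z) \<le> M" and "0 \<le> M"
    and step: "\<And>k i. 1 \<le> k \<Longrightarrow> k \<le> K \<Longrightarrow> i < n \<Longrightarrow>
      v k i \<in> X \<and> y (Suc k) i = (\<Sum>j<n. B i j *\<^sub>R y k j) + a *\<^sub>R (v k i - (\<Sum>j<n. B i j *\<^sub>R y k j))"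
  shows "deviation n (y (Suc K)) \<le> \<sigma> ^ K * deviation n (y 1) + a * sqrt (real n) * M / (1 - \<sigma>)"
proof (rule linear_recurrence_le[where y = "\<lambda>k. deviation n (y k)"])
  fix k assume k: "1 \<le> k" "k \<le> K"
  then have "deviation n (y (Suc k))
      = deviation n (\<lambda>i. (\<Sum>j<n. B i j *\<^sub>R y k j) + a *\<^sub>R (v k i - (\<Sum>j<n. B i j *\<^sub>R y k j)))"
    using step by (intro deviation_cong) auto
  also have "\<dots> \<le> \<sigma> * deviation n (y k) + a * sqrt (real n) * M"
    using step k by (intro deviation_step_le[OF mix \<open>0 \<le> \<zeta>\<close> \<open>1 \<le> n\<close> \<sigma>(1,3) a X(1) _ X(2)]) auto
  finally show "deviation n (y (Suc k)) \<le> \<sigma> * deviation n (y k) + a * sqrt (real n) * M" .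
qed (use \<sigma> a \<open>0 \<le> M\<close> in auto)

section \<open>Summation over the rounds\<close>

lemma sum_le_of_linear_recurrence:
  fixes y b :: "nat \<Rightarrow> real"
  assumes rec: "\<And>t. 1 \<le> t \<Longrightarrow> t < T \<Longrightarrow> y (Suc t) \<le> q * y t + b t"
    and "0 \<le> q" "\<And>t. 0 \<le> y t" "\<And>t. 1 \<le> t \<Longrightarrow> 0 \<le> b t"
  shows "(1 - q) * (\<Sum>t=1..T. y t) \<le> y 1 + (\<Sum>t=1..T. b t)"
proof -
  have partial: "(1 - q) * (\<Sum>t=1..m. y t) + q * y m \<le> y 1 + (\<Sum>t=1..<m. b t)"
    if "1 \<le> m" "m \<le> T" for m
    using that
  proof (induction m rule: dec_induct)
    case (step m)
    then show ?case
      using rec[of m] by (simp add: algebra_simps)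
  qed (simp add: algebra_simps)
  show ?thesis
  proof (cases "T = 0")
    case False
    then have "(1 - q) * (\<Sum>t=1..T. y t) + q * y T \<le> y 1 + (\<Sum>t=1..<T. b t)"
      using partial[of T] by simp
    moreover have "0 \<le> q * y T"
      using \<open>0 \<le> q\<close> assms(3) by simp
    ultimately have "(1 - q) * (\<Sum>t=1..T. y t) \<le> y 1 + (\<Sum>t=1..<T. b t)"
      by linarith
    also have "(\<Sum>t=1..<T. b t) \<le> (\<Sum>t=1..T. b t)"
      using assms(4) by (intro sum_mono2) auto
    finally show ?thesis by simp
  qed (use assms(3) in simp)
qed

lemma sum_sq_norm_diff_xavg_le:
  fixes x :: "nat \<Rightarrow> 'a::real_inner"
  assumes "1 \<le> n"
  shows "(\<Sum>i<n. (norm (x i - xavg n x))\<^sup>2) \<le> (\<Sum>i<n. (norm (x i))\<^sup>2)"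
proof -
  define c where "c = xavg n x"
  have sum_x: "(\<Sum>i<n. x i) = real n *\<^sub>R c"
    unfolding c_def xavg_def using assms by simp
  have "(\<Sum>i<n. (norm (x i - c))\<^sup>2) = (\<Sum>i<n. (norm (x i))\<^sup>2 - 2 * (x i \<bullet> c) + (norm c)\<^sup>2)"
    by (intro sum.cong refl)
      (simp add: power2_norm_eq_inner inner_diff_left inner_diff_right inner_commute)
  also have "\<dots> = (\<Sum>i<n. (norm (x i))\<^sup>2) - real n * (norm c)\<^sup>2"
  proof -
    have "(\<Sum>i<n. x i \<bullet> c) = real n * (norm c)\<^sup>2"
      by (simp add: inner_sum_left[symmetric] sum_x power2_norm_eq_inner)
    then show ?thesis
      by (simp add: sum.distrib sum_subtractf sum_distrib_left[symmetric])
  qed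
  finally show ?thesis
    unfolding c_def by simp
qed

lemma deviation_le_sum_norm:
  fixes x :: "nat \<Rightarrow> 'a::real_inner"
  assumes "1 \<le> n"
  shows "deviation n x \<le> (\<Sum>i<n. norm (x i))"
proof -
  have "deviation n x \<le> L2_set (\<lambda>i. norm (x i)) {..<n}"
    unfolding deviation_def L2_set_def by (rule real_sqrt_le_mono[OF sum_sq_norm_diff_xavg_le[OF assms]])
  also have "\<dots> \<le> (\<Sum>i<n. norm (x i))"
    by (rule L2_set_le_sum) simp
  finally show ?thesis .
qed

lemma sum_le_sqrt_card_L2_set:
  fixes f :: "nat \<Rightarrow> real"
  assumes "\<And>i. i < n \<Longrightarrow> 0 \<le> f i"
  shows "(\<Sum>i<n. f i) \<le> sqrt (real n) * L2_set f {..<n}"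
  using L2_set_mult_ineq[of f "\<lambda>_. 1" "{..<n}"] assms by (simp add: L2_set_constant mult.commute)

lemma sigma1_bounds:
  assumes "0 < \<zeta>" "\<zeta> < 4 * (real n)\<^sup>2"
  shows "0 < sigma1 n \<zeta>" "sigma1 n \<zeta> < 1" "1 - \<zeta> / (real n)\<^sup>2 \<le> (sigma1 n \<zeta>)\<^sup>2"
proof -
  define r where "r = \<zeta> / (4 * (real n)\<^sup>2)"
  have "n \<noteq> 0"
    using assms by (intro notI) simp
  then have r: "0 < r" "r < 1" "\<zeta> / (real n)\<^sup>2 = 4 * r"
    using assms by (simp_all add: r_def field_simps)
  have "sigma1 n \<zeta> = 1 - r"
    by (simp add: sigma1_def r_def)
  moreover have "1 - 4 * r \<le> (1 - r)\<^sup>2"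
    using r by (simp add: power2_eq_square algebra_simps)
  ultimately show "0 < sigma1 n \<zeta>" "sigma1 n \<zeta> < 1" "1 - \<zeta> / (real n)\<^sup>2 \<le> (sigma1 n \<zeta>)\<^sup>2"
    using r by simp_all
qed

lemma consensus_error_bound_relax:
  fixes L S P D M A \<sigma> q :: real
  assumes \<sigma>: "0 < \<sigma>" "\<sigma> < 1" and q: "0 \<le> q" "q < 1" and "1 \<le> n"
    and nonneg: "0 \<le> P" "0 \<le> D" "0 \<le> M" "0 \<le> A"
    and L: "L \<le> sqrt (real n) * S"
    and S: "(1 - q) * S \<le> P + sqrt (real n) * M / (1 - \<sigma>) * A"
  shows "L \<le> real n * inverse \<sigma> / (1 - q) * P + D
    + (real n ^ 2 * M * inverse \<sigma> / (\<sigma> * (1 - \<sigma>) * (1 - q)) + 2 * real n * M) * A"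
proof -
  have "S \<le> (P + sqrt (real n) * M / (1 - \<sigma>) * A) / (1 - q)"
    using S q by (simp add: field_simps)
  then have "L \<le> sqrt (real n) * ((P + sqrt (real n) * M / (1 - \<sigma>) * A) / (1 - q))"
    using L by (smt (verit) mult_left_mono real_sqrt_ge_zero of_nat_0_le_iff)
  also have "\<dots> = sqrt (real n) / (1 - q) * P + real n * M / ((1 - \<sigma>) * (1 - q)) * A"
  proof -
    have "sqrt (real n) * ((P + sqrt (real n) * M / (1 - \<sigma>) * A) / (1 - q))
        = (sqrt (real n) * P + (sqrt (real n) * sqrt (real n)) * M / (1 - \<sigma>) * A) / (1 - q)"
      by (simp add: algebra_simps add_divide_distrib)
    then show ?thesis
      by (simp add: add_divide_distrib divide_divide_eq_left)
  qed
  also have "\<dots> \<le> real n * inverse \<sigma> / (1 - q) * P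
      + real n ^ 2 * M * inverse \<sigma> / (\<sigma> * (1 - \<sigma>) * (1 - q)) * A"
  proof (intro add_mono mult_right_mono divide_right_mono)
    have "1 \<le> sqrt (real n)"
      using \<open>1 \<le> n\<close> by simp
    then have "sqrt (real n) * 1 \<le> sqrt (real n) * sqrt (real n)"
      by (intro mult_left_mono) auto
    then have "sqrt (real n) \<le> real n"
      by simp
    also have "\<dots> \<le> real n * inverse \<sigma>"
      using \<sigma> by (simp add: field_simps mult_left_le_one_le)
    finally show "sqrt (real n) \<le> real n * inverse \<sigma>" .
    have "\<sigma> * \<sigma> \<le> 1 * real n"
      using \<sigma> \<open>1 \<le> n\<close> by (intro mult_mono) auto
    then have "real n * (\<sigma> * \<sigma>) \<le> real n * real n"
      by (intro mult_left_mono) auto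
    then have "real n \<le> real n ^ 2 * inverse \<sigma> / \<sigma>"
      using \<sigma> by (simp add: field_simps power2_eq_square)
    then have "real n * M \<le> real n ^ 2 * inverse \<sigma> / \<sigma> * M"
      using nonneg by (intro mult_right_mono)
    then have "real n * M / ((1 - \<sigma>) * (1 - q)) \<le> real n ^ 2 * inverse \<sigma> / \<sigma> * M / ((1 - \<sigma>) * (1 - q))"
      using \<sigma> q by (intro divide_right_mono) auto
    then show "real n * M / ((1 - \<sigma>) * (1 - q)) \<le> real n ^ 2 * M * inverse \<sigma> / (\<sigma> * (1 - \<sigma>) * (1 - q))"
      by (simp add: divide_divide_eq_left mult_ac)
  qed (use nonneg \<sigma> q in auto)
  finally have "L \<le> real n * inverse \<sigma> / (1 - q) * P
      + real n ^ 2 * M * inverse \<sigma> / (\<sigma> * (1 - \<sigma>) * (1 - q)) * A" .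
  moreover have "0 \<le> 2 * real n * M * A"
    using nonneg by simp
  ultimately show ?thesis
    using nonneg(2) unfolding distrib_right by linarith
qed

lemma consensus_error_sum_bound:
  fixes x :: "nat \<Rightarrow> nat \<Rightarrow> 'a::real_inner"
  assumes \<sigma>: "0 < \<sigma>" "\<sigma> < 1" and q: "0 \<le> q" "q < 1" and "1 \<le> n" "0 \<le> M"
    and \<alpha>: "\<And>t. 1 \<le> t \<Longrightarrow> 0 \<le> \<alpha> t"
    and round: "\<And>t. 1 \<le> t \<Longrightarrow> t < T \<Longrightarrow>
      deviation n (x (Suc t)) \<le> q * deviation n (x t) + \<alpha> t * sqrt (real n) * M / (1 - \<sigma>)"
  shows "(\<Sum>t=1..T. \<Sum>i<n. norm (x t i - xavg n (x t)))
    \<le> real n * inverse \<sigma> / (1 - q) * (\<Sum>i<n. norm (x 1 i)) + (\<Sum>i<n. norm (x 1 i - xavg n (x 1)))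
      + (real n ^ 2 * M * inverse \<sigma> / (\<sigma> * (1 - \<sigma>) * (1 - q)) + 2 * real n * M) * (\<Sum>t=1..T. \<alpha> t)"
proof (rule consensus_error_bound_relax[OF \<sigma> q \<open>1 \<le> n\<close> _ _ \<open>0 \<le> M\<close>])
  show "(\<Sum>t=1..T. \<Sum>i<n. norm (x t i - xavg n (x t))) \<le> sqrt (real n) * (\<Sum>t=1..T. deviation n (x t))"
    unfolding deviation_def sum_distrib_left by (intro sum_mono sum_le_sqrt_card_L2_set) simp
  have "(1 - q) * (\<Sum>t=1..T. deviation n (x t))
      \<le> deviation n (x 1) + (\<Sum>t=1..T. \<alpha> t * sqrt (real n) * M / (1 - \<sigma>))"
    using round q \<sigma> \<alpha> \<open>0 \<le> M\<close>
    by (intro sum_le_of_linear_recurrence) (auto simp: deviation_def)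
  also have "\<dots> \<le> (\<Sum>i<n. norm (x 1 i)) + sqrt (real n) * M / (1 - \<sigma>) * (\<Sum>t=1..T. \<alpha> t)"
    using deviation_le_sum_norm[OF \<open>1 \<le> n\<close>] by (simp add: sum_distrib_left sum_divide_distrib mult_ac)
  finally show "(1 - q) * (\<Sum>t=1..T. deviation n (x t))
      \<le> (\<Sum>i<n. norm (x 1 i)) + sqrt (real n) * M / (1 - \<sigma>) * (\<Sum>t=1..T. \<alpha> t)" .
qed (use \<alpha> in \<open>auto intro: sum_nonneg\<close>)

theorem lemma1:
  fixes n :: nat and A :: "nat \<Rightarrow> nat \<Rightarrow> nat \<Rightarrow> real" and \<zeta> M :: real
    and X :: "'d::euclidean_space set"
    and f :: "nat \<Rightarrow> nat \<Rightarrow> 'd \<Rightarrow> real" and grad :: "nat \<Rightarrow> nat \<Rightarrow> 'd \<Rightarrow> 'd"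
    and \<alpha> :: "nat \<Rightarrow> real" and K :: "nat \<Rightarrow> nat" and T :: nat
    and x xhat gbar ghat v :: "nat \<Rightarrow> nat \<Rightarrow> nat \<Rightarrow> 'd"
  assumes n_pos: "n \<ge> 1"
    \<comment> \<open>(A1)\<close>
    and A1a: "\<zeta> > 0" "\<And>t i j. t \<ge> 1 \<Longrightarrow> i < n \<Longrightarrow> j < n \<Longrightarrow> A t i j > 0 \<Longrightarrow> A t i j > \<zeta>"
    and A1_graph: "\<And>t. t \<ge> 1 \<Longrightarrow> weights_on_graph n (A t)"
    and A1b: "\<And>t. t \<ge> 1 \<Longrightarrow> strongly_connected_graph n (A t)"
    and A1c: "\<And>t. t \<ge> 1 \<Longrightarrow> doubly_stochastic n (A t)"
    \<comment> \<open>(A2)\<close>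
    and A2: "convex X" "compact X" "\<And>y z. y \<in> X \<Longrightarrow> z \<in> X \<Longrightarrow> norm (y - z) \<le> M"
    \<comment> \<open>losses: convex and differentiable with gradient grad\<close>
    and loss_convex: "\<And>t i. t \<ge> 1 \<Longrightarrow> i < n \<Longrightarrow> convex_on X (f t i)"
    and loss_grad: "\<And>t i y. t \<ge> 1 \<Longrightarrow> i < n \<Longrightarrow> y \<in> X \<Longrightarrow>
                       (f t i has_derivative (\<lambda>h. grad t i y \<bullet> h)) (at y)"
    \<comment> \<open>parameters\<close>
    and alpha: "\<And>t. t \<ge> 1 \<Longrightarrow> 0 < \<alpha> t \<and> \<alpha> t \<le> 1"
    and K_mono: "\<And>s t. 1 \<le> s \<Longrightarrow> s \<le> t \<Longrightarrow> K s \<le> K t"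
    and K_ge2: "\<And>t. t \<ge> 1 \<Longrightarrow> K t \<ge> 2"
    and T_ge2: "T \<ge> 2"
    \<comment> \<open>Algorithm DOMFW; x t k i is x_{i,t}^k, so x t 1 i = x_{i,t}\<close>
    and init: "\<And>i. i < n \<Longrightarrow> x 1 1 i \<in> X"
    and step_xhat: "\<And>t k i. 1 \<le> t \<Longrightarrow> t \<le> T \<Longrightarrow> 1 \<le> k \<Longrightarrow> k \<le> K t \<Longrightarrow> i < n \<Longrightarrow>
          xhat t k i = (\<Sum>j<n. A t i j *\<^sub>R x t k j)"
    and step_gbar1: "\<And>t i. 1 \<le> t \<Longrightarrow> t \<le> T \<Longrightarrow> i < n \<Longrightarrow>
          gbar t 1 i = grad t i (xhat t 1 i)"
    and step_gbar: "\<And>t k i. 1 \<le> t \<Longrightarrow> t \<le> T \<Longrightarrow> 2 \<le> k \<Longrightarrow> k \<le> K t \<Longrightarrow> i < n \<Longrightarrow>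
          gbar t k i = ghat t (k - 1) i + grad t i (xhat t k i) - grad t i (xhat t (k - 1) i)"
    and step_ghat: "\<And>t k i. 1 \<le> t \<Longrightarrow> t \<le> T \<Longrightarrow> 1 \<le> k \<Longrightarrow> k \<le> K t \<Longrightarrow> i < n \<Longrightarrow>
          ghat t k i = (\<Sum>j<n. A t i j *\<^sub>R gbar t k j)"
    and step_v: "\<And>t k i. 1 \<le> t \<Longrightarrow> t \<le> T \<Longrightarrow> 1 \<le> k \<Longrightarrow> k \<le> K t \<Longrightarrow> i < n \<Longrightarrow>
          v t k i \<in> X \<and> (\<forall>y\<in>X. inner (v t k i) (ghat t k i) \<le> inner y (ghat t k i))"
    and step_x: "\<And>t k i. 1 \<le> t \<Longrightarrow> t \<le> T \<Longrightarrow> 1 \<le> k \<Longrightarrow> k \<le> K t \<Longrightarrow> i < n \<Longrightarrow>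
          x t (Suc k) i = xhat t k i + \<alpha> t *\<^sub>R (v t k i - xhat t k i)"
    and step_outer: "\<And>t i. 1 \<le> t \<Longrightarrow> t < T \<Longrightarrow> i < n \<Longrightarrow> x (Suc t) 1 i = x t (Suc (K t)) i"
  shows "(\<Sum>t=1..T. \<Sum>i<n. norm (x t 1 i - xavg n (x t 1)))
     \<le> real n * Gamma1 n \<zeta> / (1 - sigma1 n \<zeta> ^ K 1) * (\<Sum>i<n. norm (x 1 1 i))
       + (\<Sum>i<n. norm (x 1 1 i - xavg n (x 1 1)))
       + (real n ^ 2 * M * Gamma1 n \<zeta> / (sigma1 n \<zeta> * (1 - sigma1 n \<zeta>) * (1 - sigma1 n \<zeta> ^ K 1))
          + 2 * real n * M) * (\<Sum>t=1..T. \<alpha> t)"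
proof -
  define \<sigma> q where "\<sigma> = sigma1 n \<zeta>" and "q = \<sigma> ^ K 1"
  have mix: "mixing_matrix n \<zeta> (A t)" if "1 \<le> t" for t
    using that A1a(2) A1_graph A1b A1c by (simp add: mixing_matrix_def)
  have "\<zeta> < 1" "1 \<le> (real n)\<^sup>2"
    using mixing_matrix_zeta_lt_one[OF mix n_pos] n_pos by simp_all
  then have \<sigma>: "0 < \<sigma>" "\<sigma> < 1" "1 - \<zeta> / (real n)\<^sup>2 \<le> \<sigma>\<^sup>2"
    using sigma1_bounds[OF A1a(1)] by (simp_all add: \<sigma>_def)
  have "0 \<le> M"
    using A2(3)[OF init init, of 0 0] n_pos by simp
  have Gamma: "Gamma1 n \<zeta> = inverse \<sigma>"
    by (simp add: Gamma1_def sigma1_def \<sigma>_def)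
  show ?thesis
    unfolding Gamma \<sigma>_def[symmetric] q_def[symmetric]
  proof (rule consensus_error_sum_bound[where x = "\<lambda>t. x t 1", OF \<sigma>(1,2) _ _ n_pos \<open>0 \<le> M\<close>])
    fix t assume t: "1 \<le> t" "t < T"
    have "deviation n (x (Suc t) 1) = deviation n (x t (Suc (K t)))"
      using step_outer t by (intro deviation_cong) auto
    also have "\<dots> \<le> \<sigma> ^ K t * deviation n (x t 1) + \<alpha> t * sqrt (real n) * M / (1 - \<sigma>)"
      using \<sigma> A1a(1) alpha[OF t(1)] t step_x step_xhat step_v \<open>0 \<le> M\<close>
      by (intro deviation_inner_loop_le[OF mix[OF t(1)] _ n_pos _ _ _ _ _ A2(1) A2(3)]) auto
    also have "\<dots> \<le> q * deviation n (x t 1) + \<alpha> t * sqrt (real n) * M / (1 - \<sigma>)"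
      unfolding q_def using \<sigma> K_mono[of 1 t] t
      by (intro add_right_mono mult_right_mono power_decreasing) (auto simp: deviation_def)
    finally show "deviation n (x (Suc t) 1) \<le> q * deviation n (x t 1) + \<alpha> t * sqrt (real n) * M / (1 - \<sigma>)" .
  qed (use \<sigma> alpha K_ge2[of 1] in \<open>auto simp: q_def less_imp_le power_less_one_iff\<close>)
qed

end
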